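(* In the setting described in the context, let $\mathcal{Y}$ be a representative set with function $A$ and projector $P$, let $\nu=P_\sharp\mu_A$, and let $g\in\mathcal{G}$ with $\int A\circ g\,d\mu<\infty$. Let $g_\star\nu:=P_\sharp\big((g_\sharp\mu)_A\big)$ be the normalized measure associated (in the same way as $\nu$ is associated with $\mu$) with the invariant measure $g_\sharp\mu$. Then $$g_\star\nu=(P\circ g)_\sharp\,\nu_C,\qquad C=A\circ g,$$ where $\nu_C$ is the probability measure on $\mathcal{Y}$ with $d\nu_C/d\nu=C/\int C\,d\nu$.
   Context: Let $(\mathcal{X},\Sigma)$ be a measurable space. A flow on $\mathcal{X}$ is a family $(\Phi^t)_{t\in\mathbb{R}}$ of bijective measurable maps $\mathcal{X}\to\mathcal{X}$ with $\Phi^{t_1}\circ\Phi^{t_2}=\Phi^{t_1+t_2}$, such that $(x,t)\mapsto\Phi^t(x)$ is measurable. $f_\sharp\rho=\rho\circ f^{-1}$ denotes push-forward. A probability measure $\rho$ is invariant if $\Phi^t_\sharp\rho=\rho$ for all $t$. Fix a flow $\Phi^t$ and an invariant probability measure $\mu$ on $\mathcal{X}$. Let $h^a$, $a>0$, be bijective measurable maps of $\mathcal{X}$ and $\mathcal{G}$ a group (under composition) of bijective measurable maps of $\mathcal{X}$ such that for all $a,a_1,a_2>0$, $t\in\mathbb{R}$, $g\in\mathcal{G}$: $h^{a_1}\circ h^{a_2}=h^{a_1a_2}$, $\Phi^t\circ g=g\circ\Phi^t$, $g\circ h^a=h^a\circ g$, $\Phi^t\circ h^a=h^a\circ\Phi^{t/a}$.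 (Then $g_\sharp\mu$ is again invariant.) A set $\mathcal{Y}\subset\mathcal{X}$ is a representative set if for every $x$ there is a unique $a=A(x)>0$ with $h^a(x)\in\mathcal{Y}$, with $A:\mathcal{X}\to(0,\infty)$ measurable and $\int A\,d\mu<\infty$; the projector is $P(x)=h^{A(x)}(x)$. For a measure $\rho$ and positive measurable $B$ with $0<\int B\,d\rho<\infty$, $\rho_B$ is the probability measure with $d\rho_B/d\rho=B/\int B\,d\rho$. *)

theory Defs
  imports "HOL-Probability.Probability"
begin

definition bij_meas :: "'a measure \<Rightarrow> ('a \<Rightarrow> 'a) \<Rightarrow> bool" where
  "bij_meas M f \<longleftrightarrow> f \<in> M \<rightarrow>\<^sub>M M \<and> bij_betw f (space M) (space M)"

definition is_flow :: "'a measure \<Rightarrow> (real \<Rightarrow> 'a \<Rightarrow> 'a) \<Rightarrow> bool" where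
  "is_flow M \<Phi> \<longleftrightarrow>
     (\<forall>t. bij_meas M (\<Phi> t)) \<and>
     (\<forall>t1 t2. \<forall>x\<in>space M. \<Phi> t1 (\<Phi> t2 x) = \<Phi> (t1 + t2) x) \<and>
     (\<lambda>(x, t). \<Phi> t x) \<in> M \<Otimes>\<^sub>M borel \<rightarrow>\<^sub>M M"

definition invariant_prob :: "'a measure \<Rightarrow> (real \<Rightarrow> 'a \<Rightarrow> 'a) \<Rightarrow> 'a measure \<Rightarrow> bool" where
  "invariant_prob M \<Phi> \<rho> \<longleftrightarrow>
     prob_space \<rho> \<and> sets \<rho> = sets M \<and> (\<forall>t. distr \<rho> M (\<Phi> t) = \<rho>)"

text \<open>G is a group (under composition) of bijective measurable maps of M
  (maps are identified by their values on space M).\<close>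
definition is_map_group :: "'a measure \<Rightarrow> ('a \<Rightarrow> 'a) set \<Rightarrow> bool" where
  "is_map_group M G \<longleftrightarrow>
     (\<forall>g\<in>G. bij_meas M g) \<and>
     (\<exists>e\<in>G. \<forall>x\<in>space M. e x = x) \<and>
     (\<forall>f\<in>G. \<forall>g\<in>G. \<exists>k\<in>G. \<forall>x\<in>space M. k x = f (g x)) \<and>
     (\<forall>g\<in>G. \<exists>k\<in>G. \<forall>x\<in>space M. k (g x) = x \<and> g (k x) = x)"

definition representative_set ::
    "'a measure \<Rightarrow> (real \<Rightarrow> 'a \<Rightarrow> 'a) \<Rightarrow> 'a measure \<Rightarrow> 'a set \<Rightarrow> ('a \<Rightarrow> real) \<Rightarrow> bool" where
  "representative_set M h \<mu> Y A \<longleftrightarrow>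
     Y \<subseteq> space M \<and>
     (\<forall>x\<in>space M. A x > 0 \<and> h (A x) x \<in> Y \<and> (\<forall>a. a > 0 \<and> h a x \<in> Y \<longrightarrow> a = A x)) \<and>
     A \<in> borel_measurable M \<and>
     (\<integral>\<^sup>+ x. ennreal (A x) \<partial>\<mu>) < \<infinity>"

definition projector :: "(real \<Rightarrow> 'a \<Rightarrow> 'a) \<Rightarrow> ('a \<Rightarrow> real) \<Rightarrow> 'a \<Rightarrow> 'a" where
  "projector h A x = h (A x) x"

definition normalized :: "'a measure \<Rightarrow> ('a \<Rightarrow> real) \<Rightarrow> 'a measure" where
  "normalized \<rho> B = density \<rho> (\<lambda>x. ennreal (B x / (\<integral>x. B x \<partial>\<rho>)))"

end

theory Submission
  imports Defs
begin

text \<open>Uniqueness of \<open>A\<close> gives \<open>A (h a y) = A y / a\<close>, hence \<open>P (h a y) = P y\<close>. As \<open>g\<close>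
  commutes with the scalings, \<open>g (P x) = h (A x) (g x)\<close>, so \<open>A (g (P x)) = A (g x) / A x\<close> and
  \<open>P (g (P x)) = P (g x)\<close>. The first identity turns the iterated normalisation
  \<open>(\<mu>_A)_(A \<circ> g \<circ> P)\<close> into \<open>\<mu>_(A \<circ> g)\<close>, the second absorbs the extra \<open>P\<close>, and both sides
  become \<open>(P \<circ> g)\<^sub>\<sharp> \<mu>_(A \<circ> g)\<close>.\<close>

lemma sets_normalized [simp, measurable_cong]: "sets (normalized \<rho> B) = sets \<rho>"
  unfolding normalized_def by simp

lemma space_normalized [simp]: "space (normalized \<rho> B) = space \<rho>"
  unfolding normalized_def by simp

lemma normalized_cong:
  assumes "\<And>x. x \<in> space \<rho> \<Longrightarrow> B x = B' x"
  shows "normalized \<rho> B = normalized \<rho> B'"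
proof -
  have "(\<integral>x. B x \<partial>\<rho>) = (\<integral>x. B' x \<partial>\<rho>)"
    using assms by (rule Bochner_Integration.integral_cong[OF refl])
  then show ?thesis
    unfolding normalized_def density_def using assms
    by (simp cong: nn_integral_cong)
qed

lemma normalized_distr:
  assumes f: "f \<in> \<rho> \<rightarrow>\<^sub>M N" and B: "B \<in> borel_measurable N"
  shows "normalized (distr \<rho> N f) B = distr (normalized \<rho> (\<lambda>x. B (f x))) N f"
  unfolding normalized_def integral_distr[OF f B]
  by (rule density_distr) (use f B in measurable)

lemma distr_normalized_distr:
  assumes f: "f \<in> \<rho> \<rightarrow>\<^sub>M N" and B: "B \<in> borel_measurable N" and T: "T \<in> N \<rightarrow>\<^sub>M K"
  shows "distr (normalized (distr \<rho> N f) B) K T = distr (normalized \<rho> (\<lambda>x. B (f x))) K (T \<circ> f)"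
  unfolding normalized_distr[OF f B] using f T by (simp add: distr_distr)

lemma normalized_normalized:
  fixes A C :: "'a \<Rightarrow> real"
  assumes A: "A \<in> borel_measurable \<rho>" and C: "C \<in> borel_measurable \<rho>"
    and A_nonneg: "\<And>x. x \<in> space \<rho> \<Longrightarrow> 0 \<le> A x"
    and C_nonneg: "\<And>x. x \<in> space \<rho> \<Longrightarrow> 0 \<le> C x"
    and Z_pos: "0 < (\<integral>x. A x \<partial>\<rho>)"
  shows "normalized (normalized \<rho> A) C = normalized \<rho> (\<lambda>x. A x * C x)"
proof -
  define Z where "Z = (\<integral>x. A x \<partial>\<rho>)"
  define I where "I = (\<integral>x. A x * C x \<partial>\<rho>)"
  have normalized_A: "normalized \<rho> A = density \<rho> (\<lambda>x. ennreal (A x / Z))"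
    unfolding normalized_def Z_def ..
  have I_nonneg: "0 \<le> I"
    unfolding I_def using A_nonneg C_nonneg by (intro integral_nonneg_AE AE_I2) simp
  have "(\<integral>x. C x \<partial>normalized \<rho> A) = (\<integral>x. A x / Z * C x \<partial>\<rho>)"
    unfolding normalized_A using A C A_nonneg Z_pos
    by (subst integral_density) (auto simp: Z_def)
  also have "\<dots> = I / Z"
    unfolding I_def by (simp add: field_simps)
  finally have int_C: "(\<integral>x. C x \<partial>normalized \<rho> A) = I / Z" .
  have "normalized (normalized \<rho> A) C
      = density \<rho> (\<lambda>x. ennreal (A x / Z) * ennreal (C x / (I / Z)))"
    unfolding normalized_def[of "normalized \<rho> A" C] int_C unfolding normalized_A
    by (rule density_density_eq) (use A C in measurable)
  also have "\<dots> = density \<rho> (\<lambda>x. ennreal (A x * C x / I))"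
  proof (rule density_cong)
    show "AE x in \<rho>. ennreal (A x / Z) * ennreal (C x / (I / Z)) = ennreal (A x * C x / I)"
    proof (rule AE_I2)
      fix x assume "x \<in> space \<rho>"
      with A_nonneg C_nonneg have "0 \<le> A x" "0 \<le> C x" by auto
      then show "ennreal (A x / Z) * ennreal (C x / (I / Z)) = ennreal (A x * C x / I)"
        using Z_pos I_nonneg unfolding Z_def[symmetric]
        by (simp add: ennreal_mult[symmetric] field_simps)
    qed
  qed (use A C in measurable)
  finally show ?thesis
    unfolding normalized_def I_def .
qed

lemma (in prob_space) integral_pos:
  fixes f :: "'a \<Rightarrow> real"
  assumes f: "integrable M f" and pos: "\<And>x. x \<in> space M \<Longrightarrow> 0 < f x"
  shows "0 < integral\<^sup>L M f"
proof -
  have nonneg: "AE x in M. 0 \<le> f x"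
    using pos by (intro AE_I2) (simp add: less_imp_le)
  have "\<not> (AE x in M. f x = 0)"
  proof
    assume "AE x in M. f x = 0"
    with AE_space have "AE x in M. False"
      by eventually_elim (use pos in force)
    then show False by simp
  qed
  then show ?thesis
    using integral_nonneg_eq_0_iff_AE[OF f nonneg] integral_nonneg_AE[OF nonneg] by linarith
qed

locale scaling_action =
  fixes M :: "'a measure" and h :: "real \<Rightarrow> 'a \<Rightarrow> 'a"
  assumes h_mult: "\<And>a1 a2 x. a1 > 0 \<Longrightarrow> a2 > 0 \<Longrightarrow> x \<in> space M \<Longrightarrow> h a1 (h a2 x) = h (a1 * a2) x"
    and h_space: "\<And>a x. a > 0 \<Longrightarrow> x \<in> space M \<Longrightarrow> h a x \<in> space M"
begin

context
  fixes \<mu> Y A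
  assumes rep: "representative_set M h \<mu> Y A"
begin

lemma representative_fun_pos: "x \<in> space M \<Longrightarrow> 0 < A x"
  using rep unfolding representative_set_def by auto

lemma representative_fun_unique:
  "x \<in> space M \<Longrightarrow> a > 0 \<Longrightarrow> h a x \<in> Y \<Longrightarrow> a = A x"
  using rep unfolding representative_set_def by blast

lemma representative_fun_scale:
  assumes a: "a > 0" and x: "x \<in> space M"
  shows "A (h a x) = A x / a"
proof -
  have A_pos: "A x > 0" and "h (A x) x \<in> Y"
    using rep x unfolding representative_set_def by auto
  moreover have "h (A x / a) (h a x) = h (A x) x"
    using h_mult[of "A x / a" a x] a x A_pos by simp
  ultimately have "h (A x / a) (h a x) \<in> Y" by simp
  with a A_pos show ?thesis
    using representative_fun_unique[OF h_space[OF a x], of "A x / a"] by simp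
qed

lemma projector_scale:
  assumes a: "a > 0" and x: "x \<in> space M"
  shows "projector h A (h a x) = projector h A x"
  using representative_fun_scale[OF a x] h_mult[of "A x / a" a x] representative_fun_pos[OF x] a x
  by (simp add: projector_def)

lemma
  assumes g_space: "\<And>x. x \<in> space M \<Longrightarrow> g x \<in> space M"
    and g_h: "\<And>a x. a > 0 \<Longrightarrow> x \<in> space M \<Longrightarrow> g (h a x) = h a (g x)"
    and x: "x \<in> space M"
  shows representative_fun_commuting_projector: "A (g (projector h A x)) = A (g x) / A x"
    and projector_commuting_projector: "projector h A (g (projector h A x)) = projector h A (g x)"
proof -
  have A_pos: "A x > 0" using representative_fun_pos[OF x] .
  have g_projector: "g (projector h A x) = h (A x) (g x)"
    unfolding projector_def using g_h[OF A_pos x] .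
  show "A (g (projector h A x)) = A (g x) / A x"
    unfolding g_projector using representative_fun_scale[OF A_pos g_space[OF x]] .
  show "projector h A (g (projector h A x)) = projector h A (g x)"
    unfolding g_projector using projector_scale[OF A_pos g_space[OF x]] .
qed

lemma representative_fun_integral_pos:
  assumes "prob_space \<mu>" and sets_\<mu>: "sets \<mu> = sets M"
  shows "0 < (\<integral>x. A x \<partial>\<mu>)"
proof -
  have space_\<mu>: "space \<mu> = space M"
    using sets_\<mu> by (rule sets_eq_imp_space_eq)
  have "A \<in> borel_measurable \<mu>" and "(\<integral>\<^sup>+ x. ennreal (A x) \<partial>\<mu>) < \<infinity>"
    using rep measurable_cong_sets[OF sets_\<mu> refl] unfolding representative_set_def by auto
  with representative_fun_pos show ?thesis
    by (intro prob_space.integral_pos[OF \<open>prob_space \<mu>\<close>] integrableI_nonneg)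
      (auto simp: space_\<mu> less_imp_le)
qed

lemma distr_normalized_distr_projector:
  assumes "prob_space \<mu>" and sets_\<mu>: "sets \<mu> = sets M"
    and P_meas: "projector h A \<in> M \<rightarrow>\<^sub>M M" and g_meas: "g \<in> M \<rightarrow>\<^sub>M M"
    and g_h: "\<And>a x. a > 0 \<Longrightarrow> x \<in> space M \<Longrightarrow> g (h a x) = h a (g x)"
  shows "distr (normalized (distr (normalized \<mu> A) M (projector h A)) (\<lambda>x. A (g x))) M (projector h A \<circ> g)
       = distr (normalized \<mu> (\<lambda>x. A (g x))) M (projector h A \<circ> g)"
proof -
  let ?P = "projector h A"
  define \<rho> where "\<rho> = normalized \<mu> (\<lambda>x. A (g x))"
  have space_\<mu>: "space \<mu> = space M"
    using sets_\<mu> by (rule sets_eq_imp_space_eq)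
  have A_meas: "A \<in> borel_measurable M"
    using rep unfolding representative_set_def by auto
  note [measurable] = g_meas A_meas P_meas
  note [measurable_cong] = sets_\<mu>
  have g_space: "\<And>x. x \<in> space M \<Longrightarrow> g x \<in> space M"
    using g_meas by (rule measurable_space)
  have P_space: "\<And>x. x \<in> space M \<Longrightarrow> ?P x \<in> space M"
    using P_meas by (rule measurable_space)
  have "normalized (normalized \<mu> A) (\<lambda>x. A (g (?P x))) = normalized \<mu> (\<lambda>x. A x * A (g (?P x)))"
    using representative_fun_integral_pos[OF assms(1,2)] representative_fun_pos g_space P_space
    by (intro normalized_normalized) (auto simp: space_\<mu> less_imp_le)
  also have "\<dots> = \<rho>"
    unfolding \<rho>_def using representative_fun_commuting_projector[OF g_space g_h] representative_fun_pos
    by (intro normalized_cong) (fastforce simp: space_\<mu>)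
  finally have "normalized (distr (normalized \<mu> A) M ?P) (\<lambda>x. A (g x)) = distr \<rho> M ?P"
    by (subst normalized_distr) simp_all
  then have "distr (normalized (distr (normalized \<mu> A) M ?P) (\<lambda>x. A (g x))) M (?P \<circ> g)
      = distr \<rho> M (?P \<circ> g \<circ> ?P)"
    unfolding \<rho>_def by (simp add: distr_distr)
  also have "\<dots> = distr \<rho> M (?P \<circ> g)"
    using projector_commuting_projector[OF g_space g_h]
    by (intro distr_cong) (simp_all add: \<rho>_def space_\<mu>)
  finally show ?thesis
    unfolding \<rho>_def .
qed

end

end

theorem theorem2:
  fixes M :: "'a measure"
    and \<Phi> :: "real \<Rightarrow> 'a \<Rightarrow> 'a"
    and h :: "real \<Rightarrow> 'a \<Rightarrow> 'a"
    and G :: "('a \<Rightarrow> 'a) set"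
    and \<mu> :: "'a measure"
    and Y :: "'a set"
    and A :: "'a \<Rightarrow> real"
    and g :: "'a \<Rightarrow> 'a"
  assumes flow: "is_flow M \<Phi>"
    and inv: "invariant_prob M \<Phi> \<mu>"
    and h_bij: "\<And>a. a > 0 \<Longrightarrow> bij_meas M (h a)"
    and G_group: "is_map_group M G"
    and h_mult: "\<And>a1 a2 x. a1 > 0 \<Longrightarrow> a2 > 0 \<Longrightarrow> x \<in> space M \<Longrightarrow> h a1 (h a2 x) = h (a1 * a2) x"
    and \<Phi>_G: "\<And>t g x. g \<in> G \<Longrightarrow> x \<in> space M \<Longrightarrow> \<Phi> t (g x) = g (\<Phi> t x)"
    and G_h: "\<And>a g x. a > 0 \<Longrightarrow> g \<in> G \<Longrightarrow> x \<in> space M \<Longrightarrow> g (h a x) = h a (g x)"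
    and \<Phi>_h: "\<And>t a x. a > 0 \<Longrightarrow> x \<in> space M \<Longrightarrow> \<Phi> t (h a x) = h a (\<Phi> (t / a) x)"
    and rep: "representative_set M h \<mu> Y A"
    and P_meas: "projector h A \<in> M \<rightarrow>\<^sub>M M"
    and g_G: "g \<in> G"
    and Ag_fin: "(\<integral>\<^sup>+ x. ennreal (A (g x)) \<partial>\<mu>) < \<infinity>"
  shows "distr (normalized (distr \<mu> M g) A) M (projector h A)
       = distr (normalized (distr (normalized \<mu> A) M (projector h A)) (\<lambda>x. A (g x)))
               M (projector h A \<circ> g)"
proof -
  have sets_\<mu>: "sets \<mu> = sets M" and prob: "prob_space \<mu>"
    using inv unfolding invariant_prob_def by auto
  interpret scaling_action M h
  proof
    show "h a x \<in> space M" if "a > 0" "x \<in> space M" for a x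
      using h_bij[OF that(1)] that(2) unfolding bij_meas_def by (blast intro: measurable_space)
  qed (fact h_mult)
  have g_meas: "g \<in> M \<rightarrow>\<^sub>M M"
    using G_group g_G unfolding is_map_group_def bij_meas_def by blast
  have "A \<in> borel_measurable M"
    using rep unfolding representative_set_def by auto
  then have "distr (normalized (distr \<mu> M g) A) M (projector h A)
      = distr (normalized \<mu> (\<lambda>x. A (g x))) M (projector h A \<circ> g)"
    using g_meas P_meas measurable_cong_sets[OF sets_\<mu> refl] by (intro distr_normalized_distr) auto
  also have "\<dots> = distr (normalized (distr (normalized \<mu> A) M (projector h A)) (\<lambda>x. A (g x)))
      M (projector h A \<circ> g)"
    by (rule distr_normalized_distr_projector[OF rep prob sets_\<mu> P_meas g_meas G_h[OF _ g_G], symmetric])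
  finally show ?thesis .
qed

end
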